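(* Let $c\in[\frac12,1)$ and let $d,\delta$ be positive integers with $d\ge\delta$. Let $G$ be a graph with maximum degree $\delta$ and $w:V(G)\to[0,1]$ a weight function with $w(V(G))=1$, and assume $G$ has no $d$-bounded $(w,c)$-balanced separator. Fix a bijection $\mathcal{O}:V(G)\to\{1,\dots,|V(G)|\}$ and let $\beta$ be the star-free bag of $G$. Let $F$ be a forcer for $G$. Then $G[\beta]$ is $F$-free.
   Context: For $X\subseteq V(G)$, $w(X)=\sum_{x\in X}w(x)$; $N(X)$ is the set of vertices outside $X$ with a neighbor in $X$, $N[X]=N(X)\cup X$; $N^d[v]$ is the set of vertices at distance at most $d$ from $v$. $X$ is $d$-bounded if $X\subseteq N^d[v]$ for some $v$; $X$ is a $(w,c)$-balanced separator if every connected component $D$ of $G\setminus X$ has $w(D)\le c$. For $v\in V(G)$, the canonical star separation $S_v=(A_v,C_v,B_v)$: $B_v$ is the (under these assumptions unique) largest-weight connected component of $G\setminus N[v]$, $C_v$ consists of $v$ and every vertex of $N(v)$ with a neighbor in $B_v$, and $A_v=V(G)\setminus(B_v\cup C_v)$. Vertices $u,v$ are star twins if $B_u=B_v$, $C_u\setminus\{u\}=C_v\setminus\{v\}$, $A_u\setminus\{v\}=A_v\setminus\{u\}$. The partial order $\le_A$: $x\le_A y$ if $x=y$, or $x,y$ are star twins and $\mathcal{O}(x)<\mathcal{O}(y)$, or $x,y$ are not star twins and $y\in A_x$. Let $X$ be the set of minimal elements of $\le_A$; the star-free bag is $\beta=\bigcap_{x\in X}(B_x\cup C_x)$. For $Y\subseteq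 V(G)$ and $v\in V(G)\setminus Y$, $v$ breaks $Y$ if for every connected component $D$ of $G\setminus N[v]$, $Y\not\subseteq N[D]$. A graph $F$ is a forcer for $G$ if for every $Y\subseteq V(G)$ with $G[Y]$ isomorphic to $F$ there is $v\in Y$ that breaks $Y\setminus\{v\}$. *)

theory Defs
  imports Complex_Main
begin

definition graph :: "'a set \<Rightarrow> ('a \<Rightarrow> 'a \<Rightarrow> bool) \<Rightarrow> bool" where
  "graph V E \<longleftrightarrow> finite V \<and> (\<forall>x y. E x y \<longrightarrow> x \<in> V \<and> y \<in> V)
     \<and> (\<forall>x y. E x y \<longrightarrow> E y x) \<and> (\<forall>x. \<not> E x x)"

definition degree :: "'a set \<Rightarrow> ('a \<Rightarrow> 'a \<Rightarrow> bool) \<Rightarrow> 'a \<Rightarrow> nat" where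
  "degree V E v = card {u \<in> V. E v u}"

definition max_degree :: "'a set \<Rightarrow> ('a \<Rightarrow> 'a \<Rightarrow> bool) \<Rightarrow> nat" where
  "max_degree V E = Max (degree V E ` V)"

definition wsum :: "('a \<Rightarrow> real) \<Rightarrow> 'a set \<Rightarrow> real" where
  "wsum w X = (\<Sum>x\<in>X. w x)"

definition nbhd :: "'a set \<Rightarrow> ('a \<Rightarrow> 'a \<Rightarrow> bool) \<Rightarrow> 'a set \<Rightarrow> 'a set" where
  "nbhd V E X = {y \<in> V - X. \<exists>x\<in>X. E x y}"

definition cnbhd :: "'a set \<Rightarrow> ('a \<Rightarrow> 'a \<Rightarrow> bool) \<Rightarrow> 'a set \<Rightarrow> 'a set" where
  "cnbhd V E X = nbhd V E X \<union> X"

definition ball_d :: "'a set \<Rightarrow> ('a \<Rightarrow> 'a \<Rightarrow> bool) \<Rightarrow> nat \<Rightarrow> 'a \<Rightarrow> 'a set" where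
  "ball_d V E d v = {u \<in> V. \<exists>k\<le>d. (E ^^ k) v u}"

definition d_bounded :: "'a set \<Rightarrow> ('a \<Rightarrow> 'a \<Rightarrow> bool) \<Rightarrow> nat \<Rightarrow> 'a set \<Rightarrow> bool" where
  "d_bounded V E d X \<longleftrightarrow> (\<exists>v\<in>V. X \<subseteq> ball_d V E d v)"

definition component :: "('a \<Rightarrow> 'a \<Rightarrow> bool) \<Rightarrow> 'a set \<Rightarrow> 'a set \<Rightarrow> bool" where
  "component E S D \<longleftrightarrow>
     (\<exists>x\<in>S. D = {y. (\<lambda>a b. a \<in> S \<and> b \<in> S \<and> E a b)\<^sup>*\<^sup>* x y})"

definition balanced_sep ::
  "'a set \<Rightarrow> ('a \<Rightarrow> 'a \<Rightarrow> bool) \<Rightarrow> ('a \<Rightarrow> real) \<Rightarrow> real \<Rightarrow> 'a set \<Rightarrow> bool" where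
  "balanced_sep V E w c X \<longleftrightarrow> X \<subseteq> V \<and>
     (\<forall>D. component E (V - X) D \<longrightarrow> wsum w D \<le> c)"

definition Bv :: "'a set \<Rightarrow> ('a \<Rightarrow> 'a \<Rightarrow> bool) \<Rightarrow> ('a \<Rightarrow> real) \<Rightarrow> 'a \<Rightarrow> 'a set" where
  "Bv V E w v = (THE D. component E (V - cnbhd V E {v}) D \<and>
      (\<forall>D'. component E (V - cnbhd V E {v}) D' \<longrightarrow> wsum w D' \<le> wsum w D))"

definition Cv :: "'a set \<Rightarrow> ('a \<Rightarrow> 'a \<Rightarrow> bool) \<Rightarrow> ('a \<Rightarrow> real) \<Rightarrow> 'a \<Rightarrow> 'a set" where
  "Cv V E w v = {v} \<union> {u \<in> nbhd V E {v}. \<exists>b\<in>Bv V E w v. E u b}"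

definition Av :: "'a set \<Rightarrow> ('a \<Rightarrow> 'a \<Rightarrow> bool) \<Rightarrow> ('a \<Rightarrow> real) \<Rightarrow> 'a \<Rightarrow> 'a set" where
  "Av V E w v = V - (Bv V E w v \<union> Cv V E w v)"

definition star_twins ::
  "'a set \<Rightarrow> ('a \<Rightarrow> 'a \<Rightarrow> bool) \<Rightarrow> ('a \<Rightarrow> real) \<Rightarrow> 'a \<Rightarrow> 'a \<Rightarrow> bool" where
  "star_twins V E w u v \<longleftrightarrow> Bv V E w u = Bv V E w v
     \<and> Cv V E w u - {u} = Cv V E w v - {v}
     \<and> Av V E w u - {v} = Av V E w v - {u}"

definition leA ::
  "'a set \<Rightarrow> ('a \<Rightarrow> 'a \<Rightarrow> bool) \<Rightarrow> ('a \<Rightarrow> real) \<Rightarrow> ('a \<Rightarrow> nat) \<Rightarrow> 'a \<Rightarrow> 'a \<Rightarrow> bool" where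
  "leA V E w ord x y \<longleftrightarrow> x = y
     \<or> (star_twins V E w x y \<and> ord x < ord y)
     \<or> (\<not> star_twins V E w x y \<and> y \<in> Av V E w x)"

definition minimal_A ::
  "'a set \<Rightarrow> ('a \<Rightarrow> 'a \<Rightarrow> bool) \<Rightarrow> ('a \<Rightarrow> real) \<Rightarrow> ('a \<Rightarrow> nat) \<Rightarrow> 'a set" where
  "minimal_A V E w ord = {x \<in> V. \<forall>y\<in>V. leA V E w ord y x \<longrightarrow> y = x}"

definition star_free_bag ::
  "'a set \<Rightarrow> ('a \<Rightarrow> 'a \<Rightarrow> bool) \<Rightarrow> ('a \<Rightarrow> real) \<Rightarrow> ('a \<Rightarrow> nat) \<Rightarrow> 'a set" where
  "star_free_bag V E w ord = V \<inter> (\<Inter>x\<in>minimal_A V E w ord. Bv V E w x \<union> Cv V E w x)"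

definition breaks :: "'a set \<Rightarrow> ('a \<Rightarrow> 'a \<Rightarrow> bool) \<Rightarrow> 'a \<Rightarrow> 'a set \<Rightarrow> bool" where
  "breaks V E v Y \<longleftrightarrow> v \<in> V - Y \<and>
     (\<forall>D. component E (V - cnbhd V E {v}) D \<longrightarrow> \<not> Y \<subseteq> cnbhd V E D)"

definition induced_iso ::
  "('a \<Rightarrow> 'a \<Rightarrow> bool) \<Rightarrow> 'a set \<Rightarrow> 'b set \<Rightarrow> ('b \<Rightarrow> 'b \<Rightarrow> bool) \<Rightarrow> bool" where
  "induced_iso E Y VF EF \<longleftrightarrow>
     (\<exists>f. bij_betw f Y VF \<and> (\<forall>x\<in>Y. \<forall>y\<in>Y. E x y \<longleftrightarrow> EF (f x) (f y)))"

definition forcer ::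
  "'b set \<Rightarrow> ('b \<Rightarrow> 'b \<Rightarrow> bool) \<Rightarrow> 'a set \<Rightarrow> ('a \<Rightarrow> 'a \<Rightarrow> bool) \<Rightarrow> bool" where
  "forcer VF EF V E \<longleftrightarrow> (\<forall>Y. Y \<subseteq> V \<and> induced_iso E Y VF EF \<longrightarrow>
      (\<exists>v\<in>Y. breaks V E v (Y - {v})))"

definition F_free ::
  "('a \<Rightarrow> 'a \<Rightarrow> bool) \<Rightarrow> 'a set \<Rightarrow> 'b set \<Rightarrow> ('b \<Rightarrow> 'b \<Rightarrow> bool) \<Rightarrow> bool" where
  "F_free E S VF EF \<longleftrightarrow> (\<nexists>Y. Y \<subseteq> S \<and> induced_iso E Y VF EF)"

end

theory Submission
  imports Defs
begin

text \<open>Since N[v] is d-bounded it is not a balanced separator, so G - N[v] has a component of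
  weight more than c \<ge> 1/2; it is then the unique heaviest one, B_v. Consequently
  C_v = {v} \<union> N(B_v) and A_v = V - ({v} \<union> N[B_v]) depend on v only through B_v.
  If y \<in> A_x, then B_x avoids N[y] and lies in a component of weight more than c, so
  B_x \<subseteq> B_y; hence z <_A x implies B_z \<subseteq> B_x, with \<O>(z) < \<O>(x) in case of equality.
  Given y \<in> A_v, take x with y \<in> A_x and |B_x| least, and the \<O>-least z with B_z = B_x:
  then B_x is inclusion-minimal among all B's, so z is \<le>_A-minimal, and y \<in> A_z unless
  y = z, in which case B_v = B_y and v \<in> A_y. So v and y are not both in the star-free bag.
  A forcer applied to a copy of F inside the bag yields such a pair: the vertex v that breaks
  the rest, and a vertex y of the rest outside N[B_v].\<close>

lemma component_subset: "component E S D \<Longrightarrow> D \<subseteq> S"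
proof
  fix y assume "component E S D" "y \<in> D"
  then obtain x where "x \<in> S" and path: "(\<lambda>a b. a \<in> S \<and> b \<in> S \<and> E a b)\<^sup>*\<^sup>* x y"
    unfolding component_def by blast
  from path show "y \<in> S" using \<open>x \<in> S\<close> by (induction rule: rtranclp_induct) auto
qed

lemma component_closed:
  assumes "component E S D" "a \<in> D" "b \<in> S" "E a b"
  shows "b \<in> D"
proof -
  obtain x where "D = {y. (\<lambda>a b. a \<in> S \<and> b \<in> S \<and> E a b)\<^sup>*\<^sup>* x y}"
    using assms(1) unfolding component_def by blast
  then show ?thesis
    using assms component_subset[OF assms(1)] by (auto intro: rtranclp.rtrancl_into_rtrancl)
qed

lemma component_eq_if_meet:
  assumes "symp E" "component E S D1" "component E S D2" "t \<in> D1" "t \<in> D2"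
  shows "D1 = D2"
proof -
  let ?R = "\<lambda>a b. a \<in> S \<and> b \<in> S \<and> E a b"
  have "symp ?R" using assms(1) by (auto simp: symp_def)
  then have equiv: "equivp ?R\<^sup>*\<^sup>*" by (rule equivp_rtranclp)
  have "D = Collect (?R\<^sup>*\<^sup>* t)" if "component E S D" "t \<in> D" for D
  proof -
    obtain x where "D = Collect (?R\<^sup>*\<^sup>* x)" using \<open>component E S D\<close> unfolding component_def by blast
    with \<open>t \<in> D\<close> equiv show ?thesis by (simp add: equivp_def)
  qed
  then show ?thesis using assms by blast
qed

lemma component_superset:
  assumes D: "component E S D" and "D \<subseteq> T"
  shows "\<exists>D'. component E T D' \<and> D \<subseteq> D'"
proof -
  let ?RS = "\<lambda>a b. a \<in> S \<and> b \<in> S \<and> E a b" and ?RT = "\<lambda>a b. a \<in> T \<and> b \<in> T \<and> E a b"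
  obtain x where x: "x \<in> S" "D = Collect (?RS\<^sup>*\<^sup>* x)" using D unfolding component_def by blast
  have "?RT\<^sup>*\<^sup>* x t" if "?RS\<^sup>*\<^sup>* x t" for t
    using that
  proof (induction rule: rtranclp_induct)
    case (step a b)
    then have "a \<in> D" "b \<in> D" using x(2) by (auto intro: rtranclp.rtrancl_into_rtrancl)
    then show ?case using step \<open>D \<subseteq> T\<close> by (auto intro: rtranclp.rtrancl_into_rtrancl)
  qed simp
  moreover have "x \<in> T" using x \<open>D \<subseteq> T\<close> by auto
  ultimately show ?thesis unfolding component_def using x(2) by blast
qed

lemma cnbhd_mono: "X \<subseteq> Y \<Longrightarrow> cnbhd V E X \<subseteq> cnbhd V E Y"
  unfolding cnbhd_def nbhd_def by blast

lemma cnbhd_singleton_subset_ball_d: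
  assumes "v \<in> V" "0 < d"
  shows "cnbhd V E {v} \<subseteq> ball_d V E d v"
proof
  fix u assume "u \<in> cnbhd V E {v}"
  then consider "u = v" | "u \<in> V" "E v u" unfolding cnbhd_def nbhd_def by blast
  then show "u \<in> ball_d V E d v"
  proof cases
    case 1
    then show ?thesis using assms unfolding ball_d_def by (auto intro: exI[of _ 0])
  next
    case 2
    then show ?thesis using assms unfolding ball_d_def by (intro CollectI conjI exI[of _ 1]) auto
  qed
qed

lemma heavy_star_component_if_no_bounded_balanced_sep:
  assumes "0 < d" "\<not> (\<exists>X. d_bounded V E d X \<and> balanced_sep V E w c X)" "v \<in> V"
  shows "\<exists>D. component E (V - cnbhd V E {v}) D \<and> c < wsum w D"
proof -
  have "cnbhd V E {v} \<subseteq> V" using assms(3) unfolding cnbhd_def nbhd_def by blast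
  moreover have "d_bounded V E d (cnbhd V E {v})"
    using cnbhd_singleton_subset_ball_d[OF assms(3,1)] assms(3) unfolding d_bounded_def by blast
  ultimately have "\<not> (\<forall>D. component E (V - cnbhd V E {v}) D \<longrightarrow> wsum w D \<le> c)"
    using assms(2) unfolding balanced_sep_def by blast
  then show ?thesis by (auto simp: not_le)
qed

locale heavy_star_graph =
  fixes V :: "'a set" and E :: "'a \<Rightarrow> 'a \<Rightarrow> bool" and w :: "'a \<Rightarrow> real" and c :: real
  assumes graph: "graph V E"
    and weight_nonneg: "\<And>v. v \<in> V \<Longrightarrow> 0 \<le> w v"
    and weight_total: "wsum w V = 1"
    and half_le_c: "1/2 \<le> c"
    and heavy_star_component:
      "\<And>v. v \<in> V \<Longrightarrow> \<exists>D. component E (V - cnbhd V E {v}) D \<and> c < wsum w D"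
begin

abbreviation B :: "'a \<Rightarrow> 'a set" where "B \<equiv> Bv V E w"
abbreviation A :: "'a \<Rightarrow> 'a set" where "A \<equiv> Av V E w"

lemma finite_V: "finite V"
  using graph unfolding graph_def by blast

lemma symp_E: "symp E"
  using graph unfolding graph_def symp_def by blast

lemma wsum_mono: "X \<subseteq> Y \<Longrightarrow> Y \<subseteq> V \<Longrightarrow> wsum w X \<le> wsum w Y"
  unfolding wsum_def using finite_V weight_nonneg
  by (intro sum_mono2) (auto intro: finite_subset)

lemma wsum_distinct_components:
  assumes "S \<subseteq> V" "component E S D1" "component E S D2" "D1 \<noteq> D2"
  shows "wsum w D1 + wsum w D2 \<le> 1"
proof -
  have disjoint: "D1 \<inter> D2 = {}"
    using component_eq_if_meet[OF symp_E assms(2,3)] assms(4) by blast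
  have sub: "D1 \<subseteq> V" "D2 \<subseteq> V" using component_subset assms(1-3) by blast+
  then have "wsum w D1 + wsum w D2 = wsum w (D1 \<union> D2)"
    unfolding wsum_def using finite_V disjoint by (simp add: finite_subset sum.union_disjoint)
  also have "\<dots> \<le> 1" using wsum_mono[of "D1 \<union> D2" V] sub weight_total by simp
  finally show ?thesis .
qed

lemma Bv_eq_heavy_component:
  assumes H: "component E (V - cnbhd V E {v}) H" "c < wsum w H"
  shows "B v = H"
proof -
  let ?S = "V - cnbhd V E {v}"
  have other_light: "D = H \<or> wsum w D \<le> 1 - wsum w H" if "component E ?S D" for D
    using wsum_distinct_components[OF Diff_subset that H(1)] by linarith
  show ?thesis
    unfolding Bv_def
  proof (rule the_equality)
    have "wsum w D \<le> wsum w H" if "component E ?S D" for D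
      using other_light[OF that] H(2) half_le_c by (cases "D = H") auto
    with H(1) show "component E ?S H \<and> (\<forall>D. component E ?S D \<longrightarrow> wsum w D \<le> wsum w H)"
      by blast
  next
    fix D assume D: "component E ?S D \<and> (\<forall>D'. component E ?S D' \<longrightarrow> wsum w D' \<le> wsum w D)"
    then have "wsum w H \<le> wsum w D" using H(1) by blast
    then show "D = H" using other_light[of D] D H(2) half_le_c by (cases "D = H") auto
  qed
qed

lemma Bv_heavy_component:
  assumes "v \<in> V"
  shows "component E (V - cnbhd V E {v}) (B v)" "c < wsum w (B v)"
  using heavy_star_component[OF assms] Bv_eq_heavy_component by auto

lemma Bv_subset: "v \<in> V \<Longrightarrow> B v \<subseteq> V - cnbhd V E {v}"
  using component_subset Bv_heavy_component(1) by blast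

lemma finite_Bv: "v \<in> V \<Longrightarrow> finite (B v)"
  using Bv_subset finite_V by (meson Diff_subset finite_subset)

lemma not_in_cnbhd_Bv: "v \<in> V \<Longrightarrow> v \<notin> cnbhd V E (B v)"
  using Bv_subset symp_E unfolding cnbhd_def nbhd_def by (fastforce dest: sympD)

lemma nbhd_Bv_subset:
  assumes "v \<in> V"
  shows "nbhd V E (B v) \<subseteq> nbhd V E {v}"
proof
  fix u assume "u \<in> nbhd V E (B v)"
  then obtain b where u: "u \<in> V" "u \<notin> B v" and b: "b \<in> B v" "E b u"
    unfolding nbhd_def by blast
  have "u \<noteq> v" using u b not_in_cnbhd_Bv[OF assms] unfolding cnbhd_def nbhd_def by auto
  moreover have "u \<in> cnbhd V E {v}"
    using component_closed[OF Bv_heavy_component(1)[OF assms] b(1) _ b(2)] u by blast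
  ultimately show "u \<in> nbhd V E {v}" unfolding cnbhd_def by blast
qed

lemma Cv_eq: "v \<in> V \<Longrightarrow> Cv V E w v = insert v (nbhd V E (B v))"
  using nbhd_Bv_subset Bv_subset symp_E unfolding Cv_def
  by (auto simp: nbhd_def cnbhd_def dest: sympD)

lemma Av_eq: "v \<in> V \<Longrightarrow> A v = V - insert v (cnbhd V E (B v))"
  unfolding Av_def cnbhd_def by (auto simp: Cv_eq)

lemma star_twins_if_Bv_eq:
  assumes "u \<in> V" "v \<in> V" "B u = B v"
  shows "star_twins V E w u v"
  using assms not_in_cnbhd_Bv[OF assms(1)] not_in_cnbhd_Bv[OF assms(2)]
  unfolding star_twins_def by (auto simp: Cv_eq Av_eq cnbhd_def)

lemma Bv_mono:
  assumes "x \<in> V" "y \<in> A x"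
  shows "B x \<subseteq> B y"
proof -
  have y: "y \<in> V" "y \<notin> cnbhd V E (B x)" using assms by (auto simp: Av_eq)
  have "B x \<subseteq> V - cnbhd V E {y}"
    using Bv_subset[OF assms(1)] y symp_E unfolding cnbhd_def nbhd_def
    by (auto dest: sympD)
  then obtain D where D: "component E (V - cnbhd V E {y}) D" "B x \<subseteq> D"
    using component_superset[OF Bv_heavy_component(1)[OF assms(1)]] by blast
  have "c < wsum w D"
    using Bv_heavy_component(2)[OF assms(1)] wsum_mono[OF D(2)] component_subset[OF D(1)]
    by fastforce
  then show ?thesis using Bv_eq_heavy_component[OF D(1)] D(2) by simp
qed

lemma Av_anti:
  assumes "z \<in> V" "x \<in> V" "B z \<subseteq> B x" "y \<in> A x" "y \<noteq> z"
  shows "y \<in> A z"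
  using assms cnbhd_mono[OF assms(3), of V E] by (auto simp: Av_eq)

lemma leA_imp_Bv_lex_less:
  assumes "x \<in> V" "z \<in> V" "leA V E w ord z x" "z \<noteq> x"
  shows "B z \<subseteq> B x" "B z = B x \<Longrightarrow> ord z < ord x"
  using assms Bv_mono star_twins_if_Bv_eq unfolding leA_def star_twins_def by blast+

lemma minimal_AI:
  assumes "z \<in> V" "\<forall>x\<in>V. \<not> B x \<subset> B z" "\<forall>x\<in>V. B x = B z \<longrightarrow> ord z \<le> ord x"
  shows "z \<in> minimal_A V E w ord"
  unfolding minimal_A_def
proof (intro CollectI conjI ballI impI assms(1))
  fix x assume x: "x \<in> V" "leA V E w ord x z"
  show "x = z"
  proof (rule ccontr)
    assume "x \<noteq> z"
    note less = leA_imp_Bv_lex_less[OF assms(1) x this]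
    then have "B x = B z" using assms(2) x(1) by blast
    then show False using less(2) assms(3) x(1) by force
  qed
qed

lemma ex_Bv_minimal_with_Av:
  assumes "v \<in> V" "y \<in> A v"
  shows "\<exists>x\<in>V. y \<in> A x \<and> (\<forall>z\<in>V. \<not> B z \<subset> B x)"
proof -
  obtain x where x: "x \<in> V" "y \<in> A x"
    and least: "\<And>x'. x' \<in> V \<Longrightarrow> y \<in> A x' \<Longrightarrow> card (B x) \<le> card (B x')"
    using ex_has_least_nat[of "\<lambda>x. x \<in> V \<and> y \<in> A x" v "\<lambda>x. card (B x)"] assms by blast
  have "\<not> B z \<subset> B x" if "z \<in> V" for z
  proof
    assume less: "B z \<subset> B x"
    have "y \<noteq> z" using Bv_mono[OF x] less by blast
    then have "y \<in> A z" using Av_anti[OF that x(1) _ x(2)] less by blast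
    then show False
      using least[OF that] psubset_card_mono[OF finite_Bv[OF x(1)] less] by linarith
  qed
  then show ?thesis using x by blast
qed

lemma ex_minimal_A_with_Av:
  assumes "v \<in> V" "y \<in> A v"
  shows "\<exists>z\<in>minimal_A V E w ord. y \<in> A z \<or> v \<in> A z"
proof -
  obtain x where x: "x \<in> V" "y \<in> A x" and x_min: "\<forall>z\<in>V. \<not> B z \<subset> B x"
    using ex_Bv_minimal_with_Av[OF assms] by blast
  obtain z where z: "z \<in> V" "B z = B x"
    and least: "\<And>z'. z' \<in> V \<Longrightarrow> B z' = B x \<Longrightarrow> ord z \<le> ord z'"
    using ex_has_least_nat[of "\<lambda>z. z \<in> V \<and> B z = B x" x ord] x(1) by blast
  have "z \<in> minimal_A V E w ord" using minimal_AI z x_min least by simp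
  moreover have "y \<in> A z \<or> v \<in> A z"
  proof (cases "y = z")
    case True
    then have "B v = B z" using Bv_mono[OF assms] x_min assms(1) z(2) by blast
    then have "v \<in> A z"
      using True assms not_in_cnbhd_Bv[OF assms(1)] by (auto simp: Av_eq z(1))
    then show ?thesis ..
  next
    case False
    then show ?thesis using Av_anti[OF z(1) x(1) _ x(2)] z(2) by simp
  qed
  ultimately show ?thesis by blast
qed

lemma breaks_imp_Av:
  assumes "v \<in> V" "Y \<subseteq> V" "breaks V E v Y"
  shows "\<exists>y\<in>Y. y \<in> A v"
proof -
  obtain y where "y \<in> Y" "y \<notin> cnbhd V E (B v)"
    using assms(3) Bv_heavy_component(1)[OF assms(1)] unfolding breaks_def by blast
  then show ?thesis using assms unfolding breaks_def by (auto simp: Av_eq)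
qed

theorem F_free_star_free_bag:
  assumes "forcer VF EF V E"
  shows "F_free E (star_free_bag V E w ord) VF EF"
  unfolding F_free_def
proof
  let ?\<beta> = "star_free_bag V E w ord"
  assume "\<exists>Y. Y \<subseteq> ?\<beta> \<and> induced_iso E Y VF EF"
  then obtain Y where Y: "Y \<subseteq> ?\<beta>" "induced_iso E Y VF EF" by blast
  have "?\<beta> \<subseteq> V" unfolding star_free_bag_def by blast
  then obtain v where v: "v \<in> Y" "v \<in> V" "breaks V E v (Y - {v})"
    using assms Y unfolding forcer_def by blast
  then obtain y where "y \<in> Y" "y \<in> A v"
    using breaks_imp_Av[OF v(2) _ v(3)] Y(1) \<open>?\<beta> \<subseteq> V\<close> by blast
  then obtain z where "z \<in> minimal_A V E w ord" "y \<in> A z \<or> v \<in> A z"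
    using ex_minimal_A_with_Av[OF v(2)] by blast
  then show False
    using Y(1) \<open>y \<in> Y\<close> v(1) unfolding star_free_bag_def Av_def by blast
qed

end

theorem lemma4p10:
  fixes V :: "'a set" and E :: "'a \<Rightarrow> 'a \<Rightarrow> bool" and w :: "'a \<Rightarrow> real"
    and c :: real and d \<delta> :: nat and ord :: "'a \<Rightarrow> nat"
    and VF :: "'b set" and EF :: "'b \<Rightarrow> 'b \<Rightarrow> bool"
  assumes "1/2 \<le> c" "c < 1"
    and "0 < d" "0 < \<delta>" "\<delta> \<le> d"
    and "graph V E"
    and "max_degree V E = \<delta>"
    and "\<forall>v\<in>V. 0 \<le> w v \<and> w v \<le> 1"
    and "wsum w V = 1"
    and "\<not> (\<exists>X. d_bounded V E d X \<and> balanced_sep V E w c X)"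
    and "bij_betw ord V {1..card V}"
    and "graph VF EF"
    and "forcer VF EF V E"
  shows "F_free E (star_free_bag V E w ord) VF EF"
proof -
  interpret heavy_star_graph V E w c
    using assms heavy_star_component_if_no_bounded_balanced_sep[OF assms(3,10)]
    by unfold_locales auto
  show ?thesis using F_free_star_free_bag[OF assms(13)] .
qed

end
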